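(* For every integer $n\ge6$ there exists a hyperbolic prismatic tetrahedron $\Pi_{3,3}^n$.
   Context: Let $P_{3,3}^n$ be the regular (possibly ideal or hyperideal) hyperbolic tetrahedron centered at a point $O$ with dihedral angle $2\pi/n$ (in the ball model it can be taken as the intersection of the unit ball with the exteriors of the spheres orthogonal to the unit sphere centered at $a(1,1,1),a(1,-1,-1),a(-1,1,-1),a(-1,-1,1)$, whose dihedral angle $\alpha$ satisfies $\cos\alpha=\frac{a^2+3}{3(a^2-1)}$). Let $\Gamma_{3,3}^n$ be the group generated by reflections in the planes of its faces. A prismatic tetrahedron $\Pi_{3,3}^n$ is obtained by choosing a smaller compact regular tetrahedron $Q$ centered at $O$, aligned with $P_{3,3}^n$ (each face of $Q$ perpendicular to the axis through $O$ and the center of the corresponding face of $P_{3,3}^n$) and inside it, such that for every face $F$ of $Q$ the face $F$ and its reflection $F'$ in the corresponding face of $P_{3,3}^n$ bound a prism whose three lateral faces are regular squares; $\Pi_{3,3}^n$ is the union of all $\Gamma_{3,3}^n$-images of these lateral squares. Existence of $\Pi_{3,3}^n$ means existence of such a $Q$. *)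

theory Defs
  imports "HOL-Analysis.Analysis"
begin

(* Points of hyperbolic 3-space: Poincare ball model, the open unit ball in real^3. *)

definition hdist :: "real^3 \<Rightarrow> real^3 \<Rightarrow> real" where
  "hdist x y = arcosh (1 + 2 * (norm (x - y))\<^sup>2 / ((1 - (norm x)\<^sup>2) * (1 - (norm y)\<^sup>2)))"

(* hyperbolic angle at B between the geodesics BA and BC (hyperbolic law of cosines) *)
definition hangle :: "real^3 \<Rightarrow> real^3 \<Rightarrow> real^3 \<Rightarrow> real" where
  "hangle A B C = arccos ((cosh (hdist B A) * cosh (hdist B C) - cosh (hdist A C))
                           / (sinh (hdist B A) * sinh (hdist B C)))"

(* Passage between the Poincare ball and the Klein model (where geodesics, planes and
   convex hulls are Euclidean ones). *)
definition klein :: "real^3 \<Rightarrow> real^3" where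
  "klein x = (2 / (1 + (norm x)\<^sup>2)) *\<^sub>R x"

definition ball_of_klein :: "real^3 \<Rightarrow> real^3" where
  "ball_of_klein k = (1 / (1 + sqrt (1 - (norm k)\<^sup>2))) *\<^sub>R k"

definition hhull :: "(real^3) set \<Rightarrow> (real^3) set" where
  "hhull S = ball_of_klein ` (convex hull (klein ` S))"

definition vdir :: "nat \<Rightarrow> real^3" where
  "vdir i = (if i = 0 then vector [1, 1, 1] else if i = 1 then vector [1, -1, -1]
             else if i = 2 then vector [-1, 1, -1] else vector [-1, -1, 1])"

(* face i of P: sphere orthogonal to the unit sphere, centred at a * vdir i / |vdir i| *)
definition P_center :: "real \<Rightarrow> nat \<Rightarrow> real^3" where
  "P_center a i = (a / sqrt 3) *\<^sub>R vdir i"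

definition P_radius :: "real \<Rightarrow> real" where
  "P_radius a = sqrt (a\<^sup>2 - 1)"

(* the regular tetrahedron P (intersection of the ball with the closed exteriors) *)
definition tetP :: "real \<Rightarrow> (real^3) set" where
  "tetP a = {x. norm x < 1 \<and> (\<forall>i<4. dist x (P_center a i) \<ge> P_radius a)}"

(* hyperbolic reflection in the plane of face i of P (inversion in the sphere) *)
definition reflP :: "real \<Rightarrow> nat \<Rightarrow> real^3 \<Rightarrow> real^3" where
  "reflP a i x = P_center a i
      + ((P_radius a)\<^sup>2 / (norm (x - P_center a i))\<^sup>2) *\<^sub>R (x - P_center a i)"

definition regular_square :: "real^3 \<Rightarrow> real^3 \<Rightarrow> real^3 \<Rightarrow> real^3 \<Rightarrow> bool" where
  "regular_square A B C D \<longleftrightarrow>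
     coplanar (klein ` {A, B, C, D}) \<and>
     hdist A B > 0 \<and> hdist A B = hdist B C \<and> hdist B C = hdist C D \<and> hdist C D = hdist D A \<and>
     hangle D A B = hangle A B C \<and> hangle A B C = hangle B C D \<and> hangle B C D = hangle C D A"

(* q 0 .. q 3 are the vertices of a compact regular tetrahedron Q centred at O = 0, aligned
   with P: the face of Q opposite q i (its face number i) lies in a hyperbolic plane
   perpendicular to the axis through O in direction vdir i (towards the centre of face i of P),
   on the same side of O as face i of P.  In the Klein model such planes are the Euclidean
   planes {k. k \<bullet> vdir i = t}. *)
definition aligned_regular_tet :: "(nat \<Rightarrow> real^3) \<Rightarrow> bool" where
  "aligned_regular_tet q \<longleftrightarrow>
     (\<forall>i<4. norm (q i) < 1) \<and>
     hdist (q 0) (q 1) > 0 \<and>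
     (\<forall>i<4. \<forall>j<4. i \<noteq> j \<longrightarrow> hdist (q i) (q j) = hdist (q 0) (q 1)) \<and>
     (\<forall>i<4. hdist 0 (q i) = hdist 0 (q 0)) \<and>
     (\<forall>i<4. \<exists>t>0. \<forall>j<4. j \<noteq> i \<longrightarrow> klein (q j) \<bullet> vdir i = t)"

definition prismatic_exists :: "real \<Rightarrow> bool" where
  "prismatic_exists a \<longleftrightarrow>
     (\<exists>q. aligned_regular_tet q \<and> hhull (q ` {..<4}) \<subseteq> tetP a \<and>
        (\<forall>i<4. \<forall>j<4. \<forall>k<4. j \<noteq> i \<and> k \<noteq> i \<and> j \<noteq> k \<longrightarrow>
           regular_square (q j) (q k) (reflP a i (q k)) (reflP a i (q j))))"

end

theory Submission
  imports Defs
begin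

(* Take Q with vertices -s * vdir j. The faces of P lie on spheres orthogonal to the unit sphere,
   so the reflections in them are sphere inversions, which are hyperbolic isometries. Hence the
   lateral quadrilateral q_j q_k q_k' q_j' over an edge of Q is planar, has equal diagonals, equal
   bases q_j q_k, q_j' q_k' and equal legs q_j q_j', q_k q_k'; it is a regular square exactly when a
   leg is as long as a base. With b = a / sqrt 3 and R = sqrt (a^2 - 1) this is the quadratic
   1 - 2 s b + 3 s^2 = 2 sqrt 2 R s. For n >= 6 the angle condition forces a^2 >= 3, and then the
   smaller root has 3 s^2 < 1, so Q is compact, while the positive right-hand side keeps Q on the
   inner side of every face of P. *)

definition hdelta :: "real^3 \<Rightarrow> real^3 \<Rightarrow> real" where
  "hdelta x y = (norm (x - y))\<^sup>2 / ((1 - (norm x)\<^sup>2) * (1 - (norm y)\<^sup>2))"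

lemma hdist_eq_arcosh_hdelta: "hdist x y = arcosh (1 + 2 * hdelta x y)"
  by (simp add: hdist_def hdelta_def)

lemma hdelta_commute: "hdelta x y = hdelta y x"
  by (simp add: hdelta_def norm_minus_commute mult.commute)

definition sphere_inversion :: "'a::real_inner \<Rightarrow> real \<Rightarrow> 'a \<Rightarrow> 'a" where
  "sphere_inversion c r x = c + (r\<^sup>2 / (norm (x - c))\<^sup>2) *\<^sub>R (x - c)"

lemma reflP_eq_sphere_inversion: "reflP a i = sphere_inversion (P_center a i) (P_radius a)"
  by (simp add: fun_eq_iff reflP_def sphere_inversion_def)

lemma norm_add_square: "(norm (x + y))\<^sup>2 = (norm x)\<^sup>2 + 2 * (x \<bullet> y) + (norm y)\<^sup>2"
  for x y :: "'a::real_inner"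
  by (simp add: power2_norm_eq_inner inner_add_left inner_add_right inner_commute)

lemma norm_diff_square: "(norm (x - y))\<^sup>2 = (norm x)\<^sup>2 - 2 * (x \<bullet> y) + (norm y)\<^sup>2"
  for x y :: "'a::real_inner"
  by (simp add: power2_norm_eq_inner inner_diff_left inner_diff_right inner_commute)

lemma one_minus_norm_sphere_inversion:
  fixes c x :: "'a::real_inner"
  assumes c: "(norm c)\<^sup>2 = r\<^sup>2 + 1" and "x \<noteq> c"
  shows "1 - (norm (sphere_inversion c r x))\<^sup>2 = r\<^sup>2 / (norm (x - c))\<^sup>2 * (1 - (norm x)\<^sup>2)"
proof -
  define u where "u = x - c"
  define l where "l = r\<^sup>2 / (norm u)\<^sup>2"
  have "u \<noteq> 0" using \<open>x \<noteq> c\<close> by (simp add: u_def)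
  have "sphere_inversion c r x = c + l *\<^sub>R u" by (simp add: sphere_inversion_def u_def l_def)
  then have "(norm (sphere_inversion c r x))\<^sup>2 = (norm c)\<^sup>2 + 2 * l * (c \<bullet> u) + l\<^sup>2 * (norm u)\<^sup>2"
    by (simp add: norm_add_square power_mult_distrib)
  moreover have "(norm x)\<^sup>2 = (norm c)\<^sup>2 + 2 * (c \<bullet> u) + (norm u)\<^sup>2"
    using norm_add_square[of c u] by (simp add: u_def)
  ultimately show ?thesis using \<open>u \<noteq> 0\<close> unfolding u_def[symmetric] l_def c
    by (simp add: field_simps power2_eq_square)
qed

lemma norm_sphere_inversion_diff:
  fixes c x y :: "'a::real_inner"
  assumes "x \<noteq> c" "y \<noteq> c"
  shows "(norm (sphere_inversion c r x - sphere_inversion c r y))\<^sup>2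
       = r\<^sup>2 * r\<^sup>2 * (norm (x - y))\<^sup>2 / ((norm (x - c))\<^sup>2 * (norm (y - c))\<^sup>2)"
proof -
  define u where "u = x - c"
  define v where "v = y - c"
  have "u \<noteq> 0" "v \<noteq> 0" using assms by (simp_all add: u_def v_def)
  have d: "sphere_inversion c r x - sphere_inversion c r y
      = (r\<^sup>2 / (norm u)\<^sup>2) *\<^sub>R u - (r\<^sup>2 / (norm v)\<^sup>2) *\<^sub>R v"
    by (simp add: sphere_inversion_def u_def v_def)
  have "x - y = u - v" by (simp add: u_def v_def)
  then have xy: "(norm (x - y))\<^sup>2 = (norm u)\<^sup>2 - 2 * (u \<bullet> v) + (norm v)\<^sup>2"
    by (simp add: norm_diff_square)
  show ?thesis
    using \<open>u \<noteq> 0\<close> \<open>v \<noteq> 0\<close> unfolding d xy u_def[symmetric] v_def[symmetric] unfolding norm_diff_square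
    by (simp add: power_mult_distrib field_simps power2_eq_square)
qed

lemma hdelta_sphere_inversion:
  assumes c: "(norm c)\<^sup>2 = r\<^sup>2 + 1" and "r \<noteq> 0" "x \<noteq> c" "y \<noteq> c"
  shows "hdelta (sphere_inversion c r x) (sphere_inversion c r y) = hdelta x y"
proof -
  have "r\<^sup>2 * r\<^sup>2 * (norm (x - y))\<^sup>2 / ((norm (x - c))\<^sup>2 * (norm (y - c))\<^sup>2)
      / ((r\<^sup>2 / (norm (x - c))\<^sup>2 * (1 - (norm x)\<^sup>2)) * (r\<^sup>2 / (norm (y - c))\<^sup>2 * (1 - (norm y)\<^sup>2)))
      = (norm (x - y))\<^sup>2 / ((1 - (norm x)\<^sup>2) * (1 - (norm y)\<^sup>2))"
    using assms by (simp add: divide_simps)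
  then show ?thesis using assms
    by (simp add: hdelta_def norm_sphere_inversion_diff one_minus_norm_sphere_inversion[OF c])
qed

lemma hdelta_sphere_inversion_self:
  assumes c: "(norm c)\<^sup>2 = r\<^sup>2 + 1" and "x \<noteq> c"
  shows "hdelta x (sphere_inversion c r x) = (1 - 2 * (x \<bullet> c) + (norm x)\<^sup>2)\<^sup>2 / (r\<^sup>2 * (1 - (norm x)\<^sup>2)\<^sup>2)"
proof -
  define u where "u = x - c"
  define m where "m = (norm u)\<^sup>2"
  have "m > 0" using \<open>x \<noteq> c\<close> by (simp add: m_def u_def)
  have mu: "norm u * norm u = m" by (simp add: m_def power2_eq_square)
  have d: "x - sphere_inversion c r x = (1 - r\<^sup>2 / m) *\<^sub>R u"
    by (simp add: sphere_inversion_def m_def u_def algebra_simps)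
  have "(norm (x - sphere_inversion c r x))\<^sup>2 = (m - r\<^sup>2)\<^sup>2 / m"
    using \<open>m > 0\<close> unfolding d by (simp add: power_mult_distrib field_simps power2_eq_square mu)
  then have "hdelta x (sphere_inversion c r x)
      = (m - r\<^sup>2)\<^sup>2 / m / ((1 - (norm x)\<^sup>2) * (r\<^sup>2 / m * (1 - (norm x)\<^sup>2)))"
    using \<open>x \<noteq> c\<close> by (simp add: hdelta_def one_minus_norm_sphere_inversion[OF c] m_def u_def)
  also have "\<dots> = (m - r\<^sup>2)\<^sup>2 / (r\<^sup>2 * (1 - (norm x)\<^sup>2)\<^sup>2)"
    using \<open>m > 0\<close> by (simp add: power2_eq_square mult_ac)
  also have "m - r\<^sup>2 = 1 - 2 * (x \<bullet> c) + (norm x)\<^sup>2"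
    using c by (simp add: m_def u_def norm_diff_square)
  finally show ?thesis .
qed

lemma coplanar_trapezoid:
  fixes x y u v :: "'a::real_vector"
  assumes "v - u = t *\<^sub>R (y - x)"
  shows "coplanar {x, y, v, u}"
proof -
  have "v \<in> affine hull {x, y, u}"
    unfolding affine_hull_3 mem_Collect_eq
  proof (intro exI conjI)
    show "v = (- t) *\<^sub>R x + t *\<^sub>R y + 1 *\<^sub>R u"
      using assms by (simp add: algebra_simps)
  qed simp
  then have "{x, y, v, u} \<subseteq> affine hull {x, y, u}"
    using hull_subset[of "{x, y, u}" affine] by auto
  then show ?thesis unfolding coplanar_def by blast
qed

lemma sphere_inversion_diff_equidistant:
  fixes c A B :: "'a::real_inner"
  assumes "norm (A - c) = norm (B - c)"
  shows "sphere_inversion c r B - sphere_inversion c r A = (r\<^sup>2 / (norm (A - c))\<^sup>2) *\<^sub>R (B - A)"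
  using assms by (simp add: sphere_inversion_def algebra_simps)

lemma norm_sphere_inversion_equidistant:
  fixes c A B :: "'a::real_inner"
  assumes c: "(norm c)\<^sup>2 = r\<^sup>2 + 1" and "A \<noteq> c" "B \<noteq> c"
    and "norm A = norm B" "norm (A - c) = norm (B - c)"
  shows "norm (sphere_inversion c r A) = norm (sphere_inversion c r B)"
proof -
  have "1 - (norm (sphere_inversion c r A))\<^sup>2 = 1 - (norm (sphere_inversion c r B))\<^sup>2"
    using assms by (simp add: one_minus_norm_sphere_inversion[OF c])
  then show ?thesis by simp
qed

lemma hdelta_sphere_inversion_diagonals:
  fixes c A B :: "real^3"
  assumes c: "(norm c)\<^sup>2 = r\<^sup>2 + 1" and "A \<noteq> c" "B \<noteq> c"
    and "norm A = norm B" and equidistant: "norm (A - c) = norm (B - c)"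
  shows "hdelta A (sphere_inversion c r B) = hdelta B (sphere_inversion c r A)"
proof -
  define l where "l = r\<^sup>2 / (norm (A - c))\<^sup>2"
  define u where "u = A - c"
  define v where "v = B - c"
  have "A - sphere_inversion c r B = u - l *\<^sub>R v" "B - sphere_inversion c r A = v - l *\<^sub>R u"
    using equidistant by (simp_all add: sphere_inversion_def l_def u_def v_def)
  moreover have "norm v = norm u" using equidistant by (simp add: u_def v_def)
  ultimately have "(norm (A - sphere_inversion c r B))\<^sup>2 = (norm (B - sphere_inversion c r A))\<^sup>2"
    by (simp add: norm_diff_square power_mult_distrib inner_commute)
  then show ?thesis
    using assms norm_sphere_inversion_equidistant[OF assms] by (simp add: hdelta_def)
qed

lemma coplanar_klein_sphere_inversion:
  fixes c A B :: "real^3"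
  assumes c: "(norm c)\<^sup>2 = r\<^sup>2 + 1" and "A \<noteq> c" "B \<noteq> c"
    and "norm A = norm B" and equidistant: "norm (A - c) = norm (B - c)"
  shows "coplanar (klein ` {A, B, sphere_inversion c r B, sphere_inversion c r A})"
proof -
  define A' where "A' = sphere_inversion c r A"
  define B' where "B' = sphere_inversion c r B"
  define \<kappa> where "\<kappa> = 2 / (1 + (norm A)\<^sup>2)"
  define \<mu> where "\<mu> = 2 / (1 + (norm A')\<^sup>2)"
  have "1 + (norm A)\<^sup>2 > 0" by (intro add_pos_nonneg) simp_all
  then have "\<kappa> \<noteq> 0" by (simp add: \<kappa>_def)
  then have "\<mu> *\<^sub>R B' - \<mu> *\<^sub>R A' = (\<mu> * (r\<^sup>2 / (norm (A - c))\<^sup>2) / \<kappa>) *\<^sub>R (\<kappa> *\<^sub>R B - \<kappa> *\<^sub>R A)"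
    using sphere_inversion_diff_equidistant[OF equidistant, of r]
    by (simp add: A'_def B'_def scaleR_right_diff_distrib[symmetric])
  then have "coplanar {\<kappa> *\<^sub>R A, \<kappa> *\<^sub>R B, \<mu> *\<^sub>R B', \<mu> *\<^sub>R A'}"
    by (rule coplanar_trapezoid)
  moreover have "norm B' = norm A'"
    using norm_sphere_inversion_equidistant[OF assms] by (simp add: A'_def B'_def)
  ultimately show ?thesis
    using \<open>norm A = norm B\<close> by (simp add: klein_def \<kappa>_def \<mu>_def A'_def B'_def)
qed

lemma regular_square_sphere_inversion:
  assumes c: "(norm c)\<^sup>2 = r\<^sup>2 + 1" and "r \<noteq> 0"
    and AB: "norm A = norm B" "norm A < 1" "A \<bullet> c = B \<bullet> c" "A \<noteq> B"
    and edge: "(1 - 2 * (A \<bullet> c) + (norm A)\<^sup>2)\<^sup>2 = r\<^sup>2 * (norm (A - B))\<^sup>2"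
  shows "regular_square A B (sphere_inversion c r B) (sphere_inversion c r A)"
proof -
  define A' where "A' = sphere_inversion c r A"
  define B' where "B' = sphere_inversion c r B"
  have "1\<^sup>2 < (norm c)\<^sup>2" using c \<open>r \<noteq> 0\<close> by simp
  then have "norm c > 1" by (rule power2_less_imp_less) simp
  then have "A \<noteq> c" "B \<noteq> c" using AB by auto
  have "(norm (A - c))\<^sup>2 = (norm (B - c))\<^sup>2" using AB by (simp add: norm_diff_square)
  then have equidistant: "norm (A - c) = norm (B - c)" by simp
  note inversion = c \<open>A \<noteq> c\<close> \<open>B \<noteq> c\<close> \<open>norm A = norm B\<close> equidistant
  have AB0: "hdelta A B = (norm (A - B))\<^sup>2 / (1 - (norm A)\<^sup>2)\<^sup>2"
    using AB by (simp add: hdelta_def power2_eq_square)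
  have "(norm A)\<^sup>2 < 1" using AB by (simp add: abs_square_less_1)
  then have "hdelta A B > 0" unfolding AB0 using AB by simp
  have "(1 - 2 * (A \<bullet> c) + (norm A)\<^sup>2)\<^sup>2 / (r\<^sup>2 * (1 - (norm A)\<^sup>2)\<^sup>2) = hdelta A B"
    unfolding edge AB0 using \<open>r \<noteq> 0\<close> by simp
  then have "hdelta A A' = hdelta A B" "hdelta B B' = hdelta A B"
    using AB \<open>A \<noteq> c\<close> \<open>B \<noteq> c\<close>
    by (simp_all add: A'_def B'_def hdelta_sphere_inversion_self[OF c])
  moreover have "hdelta B' A' = hdelta A B"
    using \<open>A \<noteq> c\<close> \<open>B \<noteq> c\<close> \<open>r \<noteq> 0\<close>
    by (simp add: A'_def B'_def hdelta_sphere_inversion[OF c] hdelta_commute)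
  moreover have "hdelta A B' = hdelta B A'"
    unfolding A'_def B'_def by (rule hdelta_sphere_inversion_diagonals[OF inversion])
  moreover have "coplanar (klein ` {A, B, B', A'})"
    unfolding A'_def B'_def by (rule coplanar_klein_sphere_inversion[OF inversion])
  ultimately show ?thesis
    using \<open>hdelta A B > 0\<close>
    unfolding regular_square_def hangle_def A'_def[symmetric] B'_def[symmetric]
    by (simp add: hdist_eq_arcosh_hdelta hdelta_commute)
qed

lemma norm_klein_lt_1:
  assumes "norm x < 1"
  shows "norm (klein x) < 1"
proof -
  have "0 < (1 - norm x)\<^sup>2" using assms by simp
  then have "2 * norm x < 1 + (norm x)\<^sup>2" by (simp add: power2_eq_square algebra_simps)
  then show ?thesis by (simp add: klein_def field_simps add_pos_nonneg)
qed

lemma norm_ball_of_klein_lt_1: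
  assumes "norm k < 1"
  shows "norm (ball_of_klein k) < 1"
proof -
  define w where "w = sqrt (1 - (norm k)\<^sup>2)"
  have "(norm k)\<^sup>2 \<le> 1" using assms by (simp add: abs_square_le_1)
  then have "w \<ge> 0" by (simp add: w_def)
  then have "norm (ball_of_klein k) = norm k / (1 + w)" by (simp add: ball_of_klein_def w_def)
  also have "\<dots> < 1" using assms \<open>w \<ge> 0\<close> by (simp add: pos_divide_less_eq)
  finally show ?thesis .
qed

lemma ball_of_klein_outside_sphere:
  assumes k: "norm k < 1" and kc: "k \<bullet> c \<le> 1" and c: "(norm c)\<^sup>2 = r\<^sup>2 + 1" and "r \<ge> 0"
  shows "r \<le> dist (ball_of_klein k) c"
proof -
  define w where "w = sqrt (1 - (norm k)\<^sup>2)"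
  have "(norm k)\<^sup>2 < 1" using k by (simp add: abs_square_less_1)
  then have w2: "w\<^sup>2 = 1 - (norm k)\<^sup>2" and "w > 0" by (simp_all add: w_def)
  have x: "ball_of_klein k = (1 / (1 + w)) *\<^sub>R k" by (simp add: ball_of_klein_def w_def)
  have "(norm (ball_of_klein k))\<^sup>2 = (1 - w) * (1 + w) / ((1 + w) * (1 + w))"
    using w2 \<open>w > 0\<close> by (simp add: x power_mult_distrib power2_eq_square algebra_simps)
  also have "\<dots> = (1 - w) / (1 + w)" using \<open>w > 0\<close> by simp
  finally have "(norm (ball_of_klein k))\<^sup>2 = (1 - w) / (1 + w)" .
  moreover have "ball_of_klein k \<bullet> c = (k \<bullet> c) / (1 + w)" by (simp add: x)
  ultimately have "(dist (ball_of_klein k) c)\<^sup>2 = (1 - w) / (1 + w) - 2 * ((k \<bullet> c) / (1 + w)) + (r\<^sup>2 + 1)"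
    using c by (simp add: dist_norm norm_diff_square)
  also have "\<dots> = r\<^sup>2 + (2 - 2 * (k \<bullet> c)) / (1 + w)"
    using \<open>w > 0\<close> by (simp add: field_simps add_nonneg_eq_0_iff)
  finally have "(dist (ball_of_klein k) c)\<^sup>2 = r\<^sup>2 + (2 - 2 * (k \<bullet> c)) / (1 + w)" .
  moreover have "(2 - 2 * (k \<bullet> c)) / (1 + w) \<ge> 0" using \<open>w > 0\<close> kc by simp
  ultimately have "r\<^sup>2 \<le> (dist (ball_of_klein k) c)\<^sup>2" by linarith
  then show ?thesis by (rule power2_le_imp_le) simp
qed

lemma vdir_inner: "i < 4 \<Longrightarrow> j < 4 \<Longrightarrow> vdir i \<bullet> vdir j = (if i = j then 3 else -1)"
  by (auto simp: less_Suc_eq numeral_eq_Suc vdir_def inner_vec_def sum_3)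

lemma norm_P_center: "i < 4 \<Longrightarrow> (norm (P_center a i))\<^sup>2 = a\<^sup>2"
  unfolding power2_norm_eq_inner P_center_def by (simp add: vdir_inner power2_eq_square)

(* In the Klein model P is cut out of the unit ball by the half-spaces P_center a i \<bullet> k \<le> 1. *)
lemma hhull_subset_tetP:
  assumes "a\<^sup>2 \<ge> 1"
    and S: "\<And>x. x \<in> S \<Longrightarrow> norm (klein x) < 1 \<and> (\<forall>i<4. P_center a i \<bullet> klein x \<le> 1)"
  shows "hhull S \<subseteq> tetP a"
proof -
  define K where "K = ball 0 1 \<inter> (\<Inter>i<4. {k. P_center a i \<bullet> k \<le> 1})"
  have "klein ` S \<subseteq> K" using S by (auto simp: K_def)
  moreover have "convex K" unfolding K_def by (intro convex_Int convex_INT convex_ball convex_halfspace_le)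
  ultimately have hull: "convex hull (klein ` S) \<subseteq> K" by (rule hull_minimal)
  have "ball_of_klein k \<in> tetP a" if "k \<in> K" for k
  proof -
    have c: "(norm (P_center a i))\<^sup>2 = (P_radius a)\<^sup>2 + 1" if "i < 4" for i
      using assms(1) that by (simp add: norm_P_center P_radius_def)
    have "norm k < 1" "\<And>i. i < 4 \<Longrightarrow> k \<bullet> P_center a i \<le> 1"
      using \<open>k \<in> K\<close> by (auto simp: K_def inner_commute)
    moreover have "P_radius a \<ge> 0" using assms(1) by (simp add: P_radius_def)
    ultimately show ?thesis
      unfolding tetP_def
      by (auto simp: norm_ball_of_klein_lt_1 intro!: ball_of_klein_outside_sphere[OF _ _ c])
  qed
  then show ?thesis using hull by (auto simp: hhull_def)
qed

definition tetQ :: "real \<Rightarrow> nat \<Rightarrow> real^3" where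
  "tetQ s j = (- s) *\<^sub>R vdir j"

lemma inner_tetQ: "i < 4 \<Longrightarrow> j < 4 \<Longrightarrow> tetQ s i \<bullet> tetQ s j = s\<^sup>2 * (if i = j then 3 else -1)"
  by (simp add: tetQ_def vdir_inner power2_eq_square)

lemma norm_tetQ: "j < 4 \<Longrightarrow> (norm (tetQ s j))\<^sup>2 = 3 * s\<^sup>2"
  by (simp add: power2_norm_eq_inner inner_tetQ)

lemma norm_tetQ_lt_1:
  assumes "j < 4" "3 * s\<^sup>2 < 1"
  shows "norm (tetQ s j) < 1"
proof -
  have "(norm (tetQ s j))\<^sup>2 < 1" using assms by (simp add: norm_tetQ)
  then show ?thesis by (simp add: abs_square_less_1)
qed

lemma inner_tetQ_P_center:
  "i < 4 \<Longrightarrow> j < 4 \<Longrightarrow> tetQ s j \<bullet> P_center a i = s * (a / sqrt 3) * (if i = j then -3 else 1)"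
  by (simp add: tetQ_def P_center_def vdir_inner)

lemma klein_tetQ: "j < 4 \<Longrightarrow> klein (tetQ s j) = (2 / (1 + 3 * s\<^sup>2)) *\<^sub>R tetQ s j"
  by (simp add: klein_def norm_tetQ)

lemma hdist_tetQ:
  assumes "i < 4" "j < 4" "i \<noteq> j"
  shows "hdist (tetQ s i) (tetQ s j) = arcosh (1 + 16 * s\<^sup>2 / (1 - 3 * s\<^sup>2)\<^sup>2)"
proof -
  have "(norm (tetQ s i - tetQ s j))\<^sup>2 = 8 * s\<^sup>2"
    using assms by (simp add: norm_diff_square norm_tetQ inner_tetQ)
  then have "hdelta (tetQ s i) (tetQ s j) = 8 * s\<^sup>2 / ((1 - 3 * s\<^sup>2) * (1 - 3 * s\<^sup>2))"
    using assms by (simp add: hdelta_def norm_tetQ)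
  then show ?thesis by (simp add: hdist_eq_arcosh_hdelta power2_eq_square)
qed

lemma aligned_regular_tet_tetQ:
  assumes "s > 0" "3 * s\<^sup>2 < 1"
  shows "aligned_regular_tet (tetQ s)"
  unfolding aligned_regular_tet_def
proof (intro conjI allI impI)
  fix i :: nat assume "i < 4"
  then show "norm (tetQ s i) < 1"
    using assms by (simp add: norm_tetQ_lt_1)
  show "hdist 0 (tetQ s i) = hdist 0 (tetQ s 0)"
    using \<open>i < 4\<close> by (simp add: hdist_def norm_tetQ)
  show "\<exists>t>0. \<forall>j<4. j \<noteq> i \<longrightarrow> klein (tetQ s j) \<bullet> vdir i = t"
  proof (intro exI conjI allI impI)
    show "2 * s / (1 + 3 * s\<^sup>2) > 0" using assms by (simp add: add_pos_nonneg)
    fix j assume "j < 4" "j \<noteq> i"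
    then show "klein (tetQ s j) \<bullet> vdir i = 2 * s / (1 + 3 * s\<^sup>2)"
      using \<open>i < 4\<close> by (simp add: klein_tetQ) (simp add: tetQ_def vdir_inner)
  qed
next
  show "hdist (tetQ s 0) (tetQ s 1) > 0"
    using assms by (simp add: hdist_tetQ)
next
  fix i j :: nat assume "i < 4" "j < 4" "i \<noteq> j"
  then show "hdist (tetQ s i) (tetQ s j) = hdist (tetQ s 0) (tetQ s 1)"
    by (simp add: hdist_tetQ)
qed

lemma hhull_tetQ_subset_tetP:
  assumes "a > 0" "a\<^sup>2 \<ge> 1" "s \<ge> 0" "3 * s\<^sup>2 < 1"
    and face: "2 * s * (a / sqrt 3) \<le> 1 + 3 * s\<^sup>2"
  shows "hhull (tetQ s ` {..<4}) \<subseteq> tetP a"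
proof (rule hhull_subset_tetP[OF \<open>a\<^sup>2 \<ge> 1\<close>])
  fix x assume "x \<in> tetQ s ` {..<4}"
  then obtain j where "j < 4" and x: "x = tetQ s j" by auto
  have "norm x < 1" using \<open>j < 4\<close> assms(4) by (simp add: x norm_tetQ_lt_1)
  moreover have "P_center a i \<bullet> klein x \<le> 1" if "i < 4" for i
  proof -
    have "P_center a i \<bullet> klein x = 2 * s * (a / sqrt 3) / (1 + 3 * s\<^sup>2) * (if i = j then -3 else 1)"
      using that \<open>j < 4\<close> by (simp add: x klein_tetQ inner_commute[of "P_center a i"] inner_tetQ_P_center mult_ac)
    moreover have "0 \<le> 2 * s * (a / sqrt 3) / (1 + 3 * s\<^sup>2)" using assms(1,3) by simp
    moreover have "2 * s * (a / sqrt 3) / (1 + 3 * s\<^sup>2) \<le> 1"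
      using face by (simp add: add_pos_nonneg divide_le_eq mult_ac)
    ultimately show ?thesis by auto
  qed
  ultimately show "norm (klein x) < 1 \<and> (\<forall>i<4. P_center a i \<bullet> klein x \<le> 1)"
    by (simp add: norm_klein_lt_1)
qed

lemma regular_square_tetQ:
  assumes "a\<^sup>2 > 1" "s > 0" "3 * s\<^sup>2 < 1"
    and edge: "(1 - 2 * s * (a / sqrt 3) + 3 * s\<^sup>2)\<^sup>2 = 8 * (a\<^sup>2 - 1) * s\<^sup>2"
    and "i < 4" "j < 4" "k < 4" "j \<noteq> i" "k \<noteq> i" "j \<noteq> k"
  shows "regular_square (tetQ s j) (tetQ s k) (reflP a i (tetQ s k)) (reflP a i (tetQ s j))"
  unfolding reflP_eq_sphere_inversion
proof (rule regular_square_sphere_inversion)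
  have "(P_radius a)\<^sup>2 = a\<^sup>2 - 1" using assms(1) by (simp add: P_radius_def)
  then show "(norm (P_center a i))\<^sup>2 = (P_radius a)\<^sup>2 + 1" "P_radius a \<noteq> 0"
    using assms(1,5) by (auto simp: norm_P_center)
  have jk: "(norm (tetQ s j - tetQ s k))\<^sup>2 = 8 * s\<^sup>2"
    using assms(6,7,10) by (simp add: norm_diff_square norm_tetQ inner_tetQ)
  then show "tetQ s j \<noteq> tetQ s k" using assms(2) by auto
  show "norm (tetQ s j) = norm (tetQ s k)"
    using assms(6,7) norm_tetQ by (metis norm_ge_zero power2_eq_iff_nonneg)
  show "norm (tetQ s j) < 1" using assms(3,6) by (rule norm_tetQ_lt_1[rotated])
  show "tetQ s j \<bullet> P_center a i = tetQ s k \<bullet> P_center a i"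
    using assms(5-9) by (simp add: inner_tetQ_P_center)
  show "(1 - 2 * (tetQ s j \<bullet> P_center a i) + (norm (tetQ s j))\<^sup>2)\<^sup>2
      = (P_radius a)\<^sup>2 * (norm (tetQ s j - tetQ s k))\<^sup>2"
    using assms(5-9) edge \<open>(P_radius a)\<^sup>2 = a\<^sup>2 - 1\<close>
    by (simp add: jk inner_tetQ_P_center norm_tetQ mult_ac)
qed

lemma quadratic_small_root:
  fixes \<beta> :: real
  assumes "\<beta> > 0" "\<beta>\<^sup>2 > 12"
  shows "\<exists>s>0. 3 * s\<^sup>2 < 1 \<and> 3 * s\<^sup>2 - \<beta> * s + 1 = 0"
proof -
  define D where "D = sqrt (\<beta>\<^sup>2 - 12)"
  define s where "s = (\<beta> - D) / 6"
  have D2: "D\<^sup>2 = \<beta>\<^sup>2 - 12" and "D > 0" using assms by (simp_all add: D_def)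
  have "D < \<beta>" using assms by (simp add: D_def real_less_lsqrt)
  have root: "3 * s\<^sup>2 - \<beta> * s + 1 = 0"
    using D2 by (simp add: s_def power2_eq_square field_simps)
  have "D * D < \<beta> * D" using \<open>D < \<beta>\<close> \<open>D > 0\<close> by simp
  then have "\<beta> * s < 2" using D2 by (simp add: s_def power2_eq_square algebra_simps)
  then have "3 * s\<^sup>2 < 1" using root by simp
  moreover have "s > 0" using \<open>D < \<beta>\<close> by (simp add: s_def)
  ultimately show ?thesis using root by blast
qed

lemma sq_ge_3_of_dihedral_angle:
  fixes a :: real
  assumes "n \<ge> 6" and angle: "cos (2 * pi / real n) = (a\<^sup>2 + 3) / (3 * (a\<^sup>2 - 1))"
  shows "a\<^sup>2 \<ge> 3"
proof -
  have "2 * pi / real n \<le> pi / 3" using assms(1) pi_gt_zero by (simp add: field_simps)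
  moreover have "2 * pi / real n > 0" using assms(1) by simp
  ultimately have "0 < (a\<^sup>2 + 3) / (3 * (a\<^sup>2 - 1))" unfolding angle[symmetric] by (intro cos_gt_zero_pi) auto
  then have "a\<^sup>2 > 1" using zero_le_power2[of a] by (auto simp: zero_less_divide_iff)
  moreover have "(a\<^sup>2 + 3) / (3 * (a\<^sup>2 - 1)) \<le> 1" unfolding angle[symmetric] by simp
  ultimately show ?thesis by (simp add: pos_divide_le_eq)
qed

lemma exists_tetQ_parameter:
  fixes a :: real
  assumes "a\<^sup>2 \<ge> 3" "a > 0"
  shows "\<exists>s>0. 3 * s\<^sup>2 < 1 \<and> 1 - 2 * s * (a / sqrt 3) + 3 * s\<^sup>2 = 2 * s * sqrt (2 * (a\<^sup>2 - 1))"
proof -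
  define \<beta> where "\<beta> = 2 * (a / sqrt 3) + 2 * sqrt (2 * (a\<^sup>2 - 1))"
  have "sqrt 3 \<le> a" using assms by (simp add: real_le_lsqrt)
  then have "1 \<le> a / sqrt 3" by simp
  moreover have "2 \<le> sqrt (2 * (a\<^sup>2 - 1))" using assms(1) by (simp add: real_le_rsqrt)
  ultimately have "6 \<le> \<beta>" unfolding \<beta>_def by linarith
  then have "6\<^sup>2 \<le> \<beta>\<^sup>2" by (rule power_mono) simp
  then obtain s where "s > 0" "3 * s\<^sup>2 < 1" "3 * s\<^sup>2 - \<beta> * s + 1 = 0"
    using quadratic_small_root[of \<beta>] \<open>6 \<le> \<beta>\<close> by auto
  then show ?thesis by (intro exI[of _ s]) (simp add: \<beta>_def algebra_simps)
qed

theorem mainTheorem4: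
  fixes n :: nat and a :: real
  assumes "n \<ge> 6"
    and "a > 0"
    and "cos (2 * pi / real n) = (a\<^sup>2 + 3) / (3 * (a\<^sup>2 - 1))"
  shows "prismatic_exists a"
proof -
  have a3: "a\<^sup>2 \<ge> 3" using assms(1,3) by (rule sq_ge_3_of_dihedral_angle)
  then obtain s where s: "s > 0" "3 * s\<^sup>2 < 1"
    and base: "1 - 2 * s * (a / sqrt 3) + 3 * s\<^sup>2 = 2 * s * sqrt (2 * (a\<^sup>2 - 1))"
    using assms(2) exists_tetQ_parameter by blast
  have edge: "(1 - 2 * s * (a / sqrt 3) + 3 * s\<^sup>2)\<^sup>2 = 8 * (a\<^sup>2 - 1) * s\<^sup>2"
    unfolding base using a3 by (simp add: power_mult_distrib)
  have "0 \<le> 2 * s * sqrt (2 * (a\<^sup>2 - 1))" using a3 s by simp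
  then have face: "2 * s * (a / sqrt 3) \<le> 1 + 3 * s\<^sup>2" using base by linarith
  show ?thesis
    unfolding prismatic_exists_def
  proof (intro exI[of _ "tetQ s"] conjI allI impI)
    show "aligned_regular_tet (tetQ s)" using s by (rule aligned_regular_tet_tetQ)
    show "hhull (tetQ s ` {..<4}) \<subseteq> tetP a"
      using assms(2) a3 s face by (intro hhull_tetQ_subset_tetP) auto
    fix i j k :: nat
    assume "i < 4" "j < 4" "k < 4" "j \<noteq> i \<and> k \<noteq> i \<and> j \<noteq> k"
    then show "regular_square (tetQ s j) (tetQ s k) (reflP a i (tetQ s k)) (reflP a i (tetQ s j))"
      using a3 s edge by (intro regular_square_tetQ) auto
  qed
qed

end
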